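(* Let $\alpha>0$, $0<\beta_1<1$, $0<\beta_2<1$, $\epsilon>0$, $\lambda>0$, and $w_0\in\mathbb{R}$. Define the Adam iterates for the gradient $g(w)=\lambda w$ by $m_0=0$, $v_0=0$ and, for $t\ge1$, $$g_t=\lambda w_{t-1},\quad m_t=\beta_1 m_{t-1}+(1-\beta_1)g_t,\quad v_t=\beta_2 v_{t-1}+(1-\beta_2)g_t^2,\quad w_t=w_{t-1}-\alpha\,\frac{m_t/(1-\beta_1^t)}{\sqrt{v_t/(1-\beta_2^t)+\epsilon}}.$$ If $w_t$ converges to some $w_*\in\mathbb{R}$ as $t\to\infty$, then $w_*=0$.
   Context: This models a single scalar weight $w_t$ of a network under $L_2$ regularization with parameter $\lambda$, trained with the Adam optimizer, in the situation where the loss gradient vanishes (the connected ReLU unit is never activated), so that the gradient equals $\lambda$ times the current weight. *)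

theory Defs
  imports Complex_Main
begin

fun adam_state :: "real \<Rightarrow> real \<Rightarrow> real \<Rightarrow> real \<Rightarrow> real \<Rightarrow> real \<Rightarrow> nat \<Rightarrow> real \<times> real \<times> real" where
  "adam_state alpha beta1 beta2 eps lam w0 0 = (0, 0, w0)"
| "adam_state alpha beta1 beta2 eps lam w0 (Suc t) =
     (let (m, v, w) = adam_state alpha beta1 beta2 eps lam w0 t;
          g = lam * w;
          m' = beta1 * m + (1 - beta1) * g;
          v' = beta2 * v + (1 - beta2) * g\<^sup>2;
          w' = w - alpha * (m' / (1 - beta1 ^ Suc t)) / sqrt (v' / (1 - beta2 ^ Suc t) + eps)
      in (m', v', w'))"

definition adam_m :: "real \<Rightarrow> real \<Rightarrow> real \<Rightarrow> real \<Rightarrow> real \<Rightarrow> real \<Rightarrow> nat \<Rightarrow> real" where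
  "adam_m alpha beta1 beta2 eps lam w0 t = fst (adam_state alpha beta1 beta2 eps lam w0 t)"
definition adam_v :: "real \<Rightarrow> real \<Rightarrow> real \<Rightarrow> real \<Rightarrow> real \<Rightarrow> real \<Rightarrow> nat \<Rightarrow> real" where
  "adam_v alpha beta1 beta2 eps lam w0 t = fst (snd (adam_state alpha beta1 beta2 eps lam w0 t))"
definition adam_w :: "real \<Rightarrow> real \<Rightarrow> real \<Rightarrow> real \<Rightarrow> real \<Rightarrow> real \<Rightarrow> nat \<Rightarrow> real" where
  "adam_w alpha beta1 beta2 eps lam w0 t = snd (snd (adam_state alpha beta1 beta2 eps lam w0 t))"

end

theory Submission
  imports Defs
begin

text \<open>A convergent iterate forces vanishing steps. Since the iterates are bounded, so is the
second-moment estimate v, hence the Adam denominator stays bounded; a vanishing step therefore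
forces the bias-corrected momentum, and with it the momentum m, to vanish. But m is an
exponential moving average of the gradients \<open>\<lambda> w\<^sub>t\<close>, so these are recovered as
\<open>(m\<^sub>t\<^sub>+\<^sub>1 - \<beta>\<^sub>1 m\<^sub>t) / (1 - \<beta>\<^sub>1)\<close> and tend to 0 as well.\<close>

lemma ema_in_interval:
  fixes x g :: "nat \<Rightarrow> real"
  assumes ema: "\<And>t. x (Suc t) = b * x t + (1 - b) * g t"
    and "0 \<le> b" "b \<le> 1" and "x 0 \<in> {A..B}" and g: "\<And>t. g t \<in> {A..B}"
  shows "x t \<in> {A..B}"
proof (induction t)
  case 0
  show ?case using assms(4) .
next
  case (Suc t)
  have "b * A + (1 - b) * A \<le> b * x t + (1 - b) * g t"
    using Suc g[of t] \<open>0 \<le> b\<close> \<open>b \<le> 1\<close> by (intro add_mono mult_left_mono) auto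
  moreover have "b * x t + (1 - b) * g t \<le> b * B + (1 - b) * B"
    using Suc g[of t] \<open>0 \<le> b\<close> \<open>b \<le> 1\<close> by (intro add_mono mult_left_mono) auto
  ultimately show ?case by (simp add: ema algebra_simps)
qed

lemma ema_input_tendsto_zero:
  fixes x g :: "nat \<Rightarrow> real"
  assumes ema: "\<And>t. x (Suc t) = b * x t + (1 - b) * g t" and "b \<noteq> 1" and "x \<longlonglongrightarrow> 0"
  shows "g \<longlonglongrightarrow> 0"
proof -
  have "(\<lambda>t. (x (Suc t) - b * x t) / (1 - b)) \<longlonglongrightarrow> (0 - b * 0) / (1 - b)"
    using \<open>b \<noteq> 1\<close> by (intro tendsto_intros LIMSEQ_Suc \<open>x \<longlonglongrightarrow> 0\<close>) auto
  moreover have "(\<lambda>t. (x (Suc t) - b * x t) / (1 - b)) = g"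
    using \<open>b \<noteq> 1\<close> by (auto simp: ema field_simps)
  ultimately show ?thesis by simp
qed

lemma LIMSEQ_zero_if_dominated_by_increments:
  fixes x y :: "nat \<Rightarrow> real"
  assumes "convergent x" and "\<And>t. \<bar>y t\<bar> \<le> c * \<bar>x (Suc t) - x t\<bar>"
  shows "y \<longlonglongrightarrow> 0"
proof (rule tendsto_0_le)
  obtain L where "x \<longlonglongrightarrow> L" using \<open>convergent x\<close> by (auto simp: convergent_def)
  then have "(\<lambda>t. x (Suc t) - x t) \<longlonglongrightarrow> L - L" by (intro tendsto_diff LIMSEQ_Suc)
  then show "(\<lambda>t. x (Suc t) - x t) \<longlonglongrightarrow> 0" by simp
  show "\<forall>\<^sub>F t in sequentially. norm (y t) \<le> norm (x (Suc t) - x t) * c"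
    using assms(2) by (simp add: mult.commute)
qed

lemma one_minus_power_Suc_bounds:
  fixes b :: real
  assumes "0 \<le> b" "b < 1"
  shows "1 - b \<le> 1 - b ^ Suc t" and "1 - b ^ Suc t \<le> 1"
  using power_Suc_le_self[of b t] assms zero_le_power[of b "Suc t"] by linarith+

lemma adam_initial [simp]:
  "adam_m alpha beta1 beta2 eps lam w0 0 = 0"
  "adam_v alpha beta1 beta2 eps lam w0 0 = 0"
  by (simp_all add: adam_m_def adam_v_def)

lemma adam_Suc:
  "adam_m alpha beta1 beta2 eps lam w0 (Suc t) =
     beta1 * adam_m alpha beta1 beta2 eps lam w0 t + (1 - beta1) * (lam * adam_w alpha beta1 beta2 eps lam w0 t)"
  "adam_v alpha beta1 beta2 eps lam w0 (Suc t) =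
     beta2 * adam_v alpha beta1 beta2 eps lam w0 t + (1 - beta2) * (lam * adam_w alpha beta1 beta2 eps lam w0 t)\<^sup>2"
  "adam_w alpha beta1 beta2 eps lam w0 (Suc t) = adam_w alpha beta1 beta2 eps lam w0 t
     - alpha * (adam_m alpha beta1 beta2 eps lam w0 (Suc t) / (1 - beta1 ^ Suc t))
       / sqrt (adam_v alpha beta1 beta2 eps lam w0 (Suc t) / (1 - beta2 ^ Suc t) + eps)"
  by (simp_all add: adam_m_def adam_v_def adam_w_def split_def Let_def)

lemma adam_v_bounds:
  assumes "0 \<le> beta2" "beta2 \<le> 1"
    and "\<And>t. (lam * adam_w alpha beta1 beta2 eps lam w0 t)\<^sup>2 \<le> G"
  shows "adam_v alpha beta1 beta2 eps lam w0 t \<in> {0..G}"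
proof (rule ema_in_interval[where x = "adam_v alpha beta1 beta2 eps lam w0"
      and g = "\<lambda>t. (lam * adam_w alpha beta1 beta2 eps lam w0 t)\<^sup>2", OF adam_Suc(2) assms(1,2)])
  have "0 \<le> G" using assms(3)[of 0] zero_le_power2 order_trans by blast
  then show "adam_v alpha beta1 beta2 eps lam w0 0 \<in> {0..G}" by simp
  show "(lam * adam_w alpha beta1 beta2 eps lam w0 t)\<^sup>2 \<in> {0..G}" for t
    using assms(3)[of t] by simp
qed

lemma adam_denominator_bounds:
  assumes "0 \<le> beta2" "beta2 < 1" "eps > 0"
    and "\<And>t. (lam * adam_w alpha beta1 beta2 eps lam w0 t)\<^sup>2 \<le> G"
  shows "0 < sqrt (adam_v alpha beta1 beta2 eps lam w0 (Suc t) / (1 - beta2 ^ Suc t) + eps)"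
    and "sqrt (adam_v alpha beta1 beta2 eps lam w0 (Suc t) / (1 - beta2 ^ Suc t) + eps)
      \<le> sqrt (G / (1 - beta2) + eps)"
proof -
  let ?v = "adam_v alpha beta1 beta2 eps lam w0 (Suc t)"
  have v: "0 \<le> ?v" "?v \<le> G" using adam_v_bounds[OF assms(1) _ assms(4)] assms(2) by auto
  have q: "1 - beta2 \<le> 1 - beta2 ^ Suc t" using one_minus_power_Suc_bounds assms(1,2) by blast
  then have "0 \<le> ?v / (1 - beta2 ^ Suc t)" using v assms(2) by simp
  then show "0 < sqrt (?v / (1 - beta2 ^ Suc t) + eps)" using \<open>eps > 0\<close> by simp
  have "?v / (1 - beta2 ^ Suc t) \<le> ?v / (1 - beta2)"
    using v q assms(2) by (intro divide_left_mono) auto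
  also have "\<dots> \<le> G / (1 - beta2)"
    using v assms(2) by (intro divide_right_mono) auto
  finally show "sqrt (?v / (1 - beta2 ^ Suc t) + eps) \<le> sqrt (G / (1 - beta2) + eps)"
    by simp
qed

lemma adam_m_tendsto_zero:
  assumes "alpha > 0" "0 \<le> beta1" "beta1 < 1" "0 \<le> beta2" "beta2 < 1" "eps > 0"
    and "convergent (adam_w alpha beta1 beta2 eps lam w0)"
  shows "adam_m alpha beta1 beta2 eps lam w0 \<longlonglongrightarrow> 0"
proof -
  define m where "m = adam_m alpha beta1 beta2 eps lam w0"
  define w where "w = adam_w alpha beta1 beta2 eps lam w0"
  obtain B where B: "\<And>t. \<bar>w t\<bar> \<le> B"
    using convergent_imp_Bseq[OF assms(7)] unfolding w_def by (metis BseqE real_norm_def)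
  define K where "K = \<bar>lam\<bar> * B"
  have "\<bar>lam * w t\<bar> \<le> K" for t
    unfolding K_def abs_mult using B[of t] by (simp add: mult_left_mono)
  then have gradient_bound: "(lam * w t)\<^sup>2 \<le> K\<^sup>2" for t
    by (metis abs_ge_zero power2_abs power_mono)
  define S where "S t = sqrt (adam_v alpha beta1 beta2 eps lam w0 (Suc t) / (1 - beta2 ^ Suc t) + eps)" for t
  note S = adam_denominator_bounds[OF assms(4-6), of lam alpha beta1 w0, folded w_def S_def, OF gradient_bound]
  define C where "C = sqrt (K\<^sup>2 / (1 - beta2) + eps) / alpha"
  have "\<bar>m (Suc t)\<bar> \<le> C * \<bar>w (Suc t) - w t\<bar>" for t
  proof -
    define d where "d = 1 - beta1 ^ Suc t"
    have d: "0 < d" "d \<le> 1" using one_minus_power_Suc_bounds[OF assms(2,3), of t] assms(3)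
      unfolding d_def by linarith+
    have "w t - w (Suc t) = alpha * (m (Suc t) / d) / S t"
      using adam_Suc(3) unfolding m_def w_def d_def S_def by simp
    then have step: "m (Suc t) / d = S t / alpha * (w t - w (Suc t))"
      using S(1)[of t] \<open>alpha > 0\<close> by (simp add: field_simps)
    have "\<bar>m (Suc t)\<bar> \<le> \<bar>m (Suc t)\<bar> / d"
      using d by (simp add: le_divide_eq mult_left_le)
    also have "\<dots> = \<bar>m (Suc t) / d\<bar>"
      using d by simp
    also have "\<dots> = S t / alpha * \<bar>w (Suc t) - w t\<bar>"
      unfolding step using S(1)[of t] \<open>alpha > 0\<close> by (simp add: abs_mult abs_minus_commute)
    also have "\<dots> \<le> C * \<bar>w (Suc t) - w t\<bar>"
      unfolding C_def using S(2)[of t] \<open>alpha > 0\<close>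
      by (intro mult_right_mono divide_right_mono) auto
    finally show ?thesis .
  qed
  then have "(\<lambda>t. m (Suc t)) \<longlonglongrightarrow> 0"
    using assms(7) unfolding w_def by (intro LIMSEQ_zero_if_dominated_by_increments) auto
  then show ?thesis unfolding m_def by (rule LIMSEQ_imp_Suc)
qed

theorem proposition3p3:
  fixes alpha beta1 beta2 eps lam w0 wstar :: real
  assumes "alpha > 0" and "0 < beta1" and "beta1 < 1" and "0 < beta2" and "beta2 < 1"
    and "eps > 0" and "lam > 0"
    and "adam_w alpha beta1 beta2 eps lam w0 \<longlonglongrightarrow> wstar"
  shows "wstar = 0"
proof -
  let ?w = "adam_w alpha beta1 beta2 eps lam w0"
  have "adam_m alpha beta1 beta2 eps lam w0 \<longlonglongrightarrow> 0"
    using assms by (intro adam_m_tendsto_zero) (auto intro: convergentI)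
  then have "(\<lambda>t. lam * ?w t) \<longlonglongrightarrow> 0"
    using \<open>beta1 < 1\<close>
    by (intro ema_input_tendsto_zero[where x = "adam_m alpha beta1 beta2 eps lam w0", OF adam_Suc(1)])
      auto
  then have "(\<lambda>t. (lam * ?w t) / lam) \<longlonglongrightarrow> 0 / lam"
    by (intro tendsto_divide tendsto_const) (use \<open>lam > 0\<close> in auto)
  then have "?w \<longlonglongrightarrow> 0" using \<open>lam > 0\<close> by simp
  with assms(8) show ?thesis using LIMSEQ_unique by blast
qed

end
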